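(* Let $\mathcal{M}$ be any $R\times K$ matrix with entries in a finite set $V$ and let $\hat v\subseteq V$. For each row $r$ let $z_r$ be the number of stretches of $\hat v$ in row $r$. For $0\le k<K$ define $$ls^+_k=\max(0,\#^{\hat v}_k-\#^{\hat v}_{k-1}),\qquad us^+_k=\#^{\hat v}_k-\max(0,\#^{\hat v}_{k-1}+\#^{\hat v}_k-R),$$ $$ls^-_k=\max(0,\#^{\hat v}_k-\#^{\hat v}_{k+1}),\qquad us^-_k=\#^{\hat v}_k-\max(0,\#^{\hat v}_{k+1}+\#^{\hat v}_k-R).$$ Then $$\sum_{k=0}^{K-1}ls^+_k\le\sum_{r=0}^{R-1}z_r\le\sum_{k=0}^{K-1}us^+_k\quad\text{and}\quad \sum_{k=0}^{K-1}ls^-_k\le\sum_{r=0}^{R-1}z_r\le\sum_{k=0}^{K-1}us^-_k.$$ Moreover, for each $k$, $ls^+_k$ and $us^+_k$ are respectively a lower and an upper bound on the number of stretches of $\hat v$ (over all rows) starting in column $k$, and $ls^-_k$, $us^-_k$ are respectively a lower and an upper bound on the number of stretches of $\hat v$ ending in column $k$.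
   Context: Columns are indexed $0,\ldots,K-1$ and rows $0,\ldots,R-1$. For $\hat v\subseteq V$ and a column $k$, $\#^{\hat v}_k$ denotes the number of rows $r$ with $\mathcal{M}_{r,k}\in\hat v$, with the convention $\#^{\hat v}_{-1}=\#^{\hat v}_{K}=0$. A stretch of $\hat v$ in row $r$ is a maximal (with respect to inclusion) interval $[a,b]$ of column indices such that $\mathcal{M}_{r,j}\in\hat v$ for all $a\le j\le b$; it starts in column $a$, ends in column $b$, and has length $b-a+1$. *)

theory Defs
  imports Main
begin

text \<open>An R x K matrix is modelled as a function M :: nat => nat => 'v, with rows
  r < R and columns k < K. Column indices for the counts are integers so that the
  convention #_{-1} = #_K = 0 can be stated.\<close>

definition colcount :: "(nat \<Rightarrow> nat \<Rightarrow> 'v) \<Rightarrow> nat \<Rightarrow> nat \<Rightarrow> 'v set \<Rightarrow> int \<Rightarrow> int" where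
  "colcount M R K vh k =
     (if 0 \<le> k \<and> k < int K then int (card {r. r < R \<and> M r (nat k) \<in> vh}) else 0)"

definition in_vh_interval :: "(nat \<Rightarrow> nat \<Rightarrow> 'v) \<Rightarrow> nat \<Rightarrow> 'v set \<Rightarrow> nat \<Rightarrow> nat \<Rightarrow> nat \<Rightarrow> bool" where
  "in_vh_interval M K vh r a b \<longleftrightarrow> a \<le> b \<and> b < K \<and> (\<forall>j. a \<le> j \<and> j \<le> b \<longrightarrow> M r j \<in> vh)"

definition is_stretch :: "(nat \<Rightarrow> nat \<Rightarrow> 'v) \<Rightarrow> nat \<Rightarrow> 'v set \<Rightarrow> nat \<Rightarrow> nat \<Rightarrow> nat \<Rightarrow> bool" where
  "is_stretch M K vh r a b \<longleftrightarrow> in_vh_interval M K vh r a b \<and>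
     (\<forall>a' b'. in_vh_interval M K vh r a' b' \<and> {a..b} \<subseteq> {a'..b'} \<longrightarrow> a' = a \<and> b' = b)"

definition num_stretches :: "(nat \<Rightarrow> nat \<Rightarrow> 'v) \<Rightarrow> nat \<Rightarrow> 'v set \<Rightarrow> nat \<Rightarrow> nat" where
  "num_stretches M K vh r = card {(a, b). is_stretch M K vh r a b}"

definition num_starting :: "(nat \<Rightarrow> nat \<Rightarrow> 'v) \<Rightarrow> nat \<Rightarrow> nat \<Rightarrow> 'v set \<Rightarrow> nat \<Rightarrow> nat" where
  "num_starting M R K vh k = card {(r, a, b). r < R \<and> is_stretch M K vh r a b \<and> a = k}"

definition num_ending :: "(nat \<Rightarrow> nat \<Rightarrow> 'v) \<Rightarrow> nat \<Rightarrow> nat \<Rightarrow> 'v set \<Rightarrow> nat \<Rightarrow> nat" where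
  "num_ending M R K vh k = card {(r, a, b). r < R \<and> is_stretch M K vh r a b \<and> b = k}"

definition ls_plus :: "(nat \<Rightarrow> nat \<Rightarrow> 'v) \<Rightarrow> nat \<Rightarrow> nat \<Rightarrow> 'v set \<Rightarrow> nat \<Rightarrow> int" where
  "ls_plus M R K vh k = max 0 (colcount M R K vh (int k) - colcount M R K vh (int k - 1))"

definition us_plus :: "(nat \<Rightarrow> nat \<Rightarrow> 'v) \<Rightarrow> nat \<Rightarrow> nat \<Rightarrow> 'v set \<Rightarrow> nat \<Rightarrow> int" where
  "us_plus M R K vh k = colcount M R K vh (int k)
     - max 0 (colcount M R K vh (int k - 1) + colcount M R K vh (int k) - int R)"

definition ls_minus :: "(nat \<Rightarrow> nat \<Rightarrow> 'v) \<Rightarrow> nat \<Rightarrow> nat \<Rightarrow> 'v set \<Rightarrow> nat \<Rightarrow> int" where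
  "ls_minus M R K vh k = max 0 (colcount M R K vh (int k) - colcount M R K vh (int k + 1))"

definition us_minus :: "(nat \<Rightarrow> nat \<Rightarrow> 'v) \<Rightarrow> nat \<Rightarrow> nat \<Rightarrow> 'v set \<Rightarrow> nat \<Rightarrow> int" where
  "us_minus M R K vh k = colcount M R K vh (int k)
     - max 0 (colcount M R K vh (int k + 1) + colcount M R K vh (int k) - int R)"

end

theory Submission
  imports Defs
begin

(* A stretch of vh in row r is determined by its first column, and a
   column k is the first column of a stretch exactly when M r k \<in> vh and either
   k = 0 or M r (k - 1) \<notin> vh (symmetrically for last columns).  Hence
   (1) z_r equals the number of "start columns" (and of "end columns") of row r;
   (2) the stretches starting in column k correspond to the rows in A - B, where A
       and B are the sets of rows having an entry of vh in column k and k - 1;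
   (3) for subsets A, B of an R-element set, |A| - |B| \<le> |A - B| \<le>
       |A| - max 0 (|A| + |B| - R) by inclusion-exclusion.
   (2) and (3) give the column-wise bounds ls_plus / us_plus (and with k + 1 in
   place of k - 1 the bounds ls_minus / us_minus); summing them over k and
   exchanging the order of the double count in (1) gives the bounds on the
   total number of stretches. *)

definition starts_at :: "(nat \<Rightarrow> nat \<Rightarrow> 'v) \<Rightarrow> nat \<Rightarrow> 'v set \<Rightarrow> nat \<Rightarrow> nat \<Rightarrow> bool" where
  "starts_at M K vh r k \<longleftrightarrow> k < K \<and> M r k \<in> vh \<and> (k = 0 \<or> M r (k - 1) \<notin> vh)"

definition ends_at :: "(nat \<Rightarrow> nat \<Rightarrow> 'v) \<Rightarrow> nat \<Rightarrow> 'v set \<Rightarrow> nat \<Rightarrow> nat \<Rightarrow> bool" where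
  "ends_at M K vh r k \<longleftrightarrow> k < K \<and> M r k \<in> vh \<and> (Suc k = K \<or> M r (Suc k) \<notin> vh)"

lemma interval_extend_left:
  assumes I: "in_vh_interval M K vh r a b" and "a > 0" and new: "M r (a - 1) \<in> vh"
  shows "in_vh_interval M K vh r (a - 1) b"
proof -
  have "M r j \<in> vh" if "a - 1 \<le> j" "j \<le> b" for j
  proof (cases "j = a - 1")
    case False
    hence "a \<le> j" using that by linarith
    thus ?thesis using I that unfolding in_vh_interval_def by blast
  qed (use new in simp)
  thus ?thesis using I unfolding in_vh_interval_def by auto
qed

lemma interval_extend_right:
  assumes "in_vh_interval M K vh r a b" and "Suc b \<noteq> K" and "M r (Suc b) \<in> vh"
  shows "in_vh_interval M K vh r a (Suc b)"
  using assms unfolding in_vh_interval_def by (auto simp: le_Suc_eq)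

lemma stretch_boundaries:
  assumes S: "is_stretch M K vh r a b"
  shows "(a = 0 \<or> M r (a - 1) \<notin> vh) \<and> (Suc b = K \<or> M r (Suc b) \<notin> vh)"
proof -
  have I: "in_vh_interval M K vh r a b" using S by (simp add: is_stretch_def)
  have left: "a = 0 \<or> M r (a - 1) \<notin> vh"
  proof (rule ccontr)
    assume "\<not> (a = 0 \<or> M r (a - 1) \<notin> vh)"
    hence "a > 0" and "in_vh_interval M K vh r (a - 1) b"
      using I interval_extend_left by auto
    moreover have "{a..b} \<subseteq> {a - 1..b}" by auto
    ultimately show False using S unfolding is_stretch_def by fastforce
  qed
  have right: "Suc b = K \<or> M r (Suc b) \<notin> vh"
  proof (rule ccontr)
    assume "\<not> (Suc b = K \<or> M r (Suc b) \<notin> vh)"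
    hence "in_vh_interval M K vh r a (Suc b)" using I interval_extend_right by auto
    moreover have "{a..b} \<subseteq> {a..Suc b}" by auto
    ultimately show False using S unfolding is_stretch_def by fastforce
  qed
  show ?thesis using left right by blast
qed

lemma boundaries_imp_stretch:
  assumes I: "in_vh_interval M K vh r a b"
    and left: "a = 0 \<or> M r (a - 1) \<notin> vh"
    and right: "Suc b = K \<or> M r (Suc b) \<notin> vh"
  shows "is_stretch M K vh r a b"
  unfolding is_stretch_def
proof (intro conjI allI impI)
  show "in_vh_interval M K vh r a b" by (fact I)
  fix a' b' assume J: "in_vh_interval M K vh r a' b' \<and> {a..b} \<subseteq> {a'..b'}"
  have "a \<le> b" using I by (simp add: in_vh_interval_def)
  hence le: "a' \<le> a" "b \<le> b'" using J by auto
  show "a' = a"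
  proof (rule ccontr)
    assume "a' \<noteq> a"
    hence "a' \<le> a - 1 \<and> a - 1 \<le> b'" "a > 0" using le \<open>a \<le> b\<close> by linarith+
    hence "M r (a - 1) \<in> vh" using J unfolding in_vh_interval_def by blast
    thus False using left \<open>a > 0\<close> by simp
  qed
  show "b' = b"
  proof (rule ccontr)
    assume "b' \<noteq> b"
    hence "M r (Suc b) \<in> vh" "Suc b < K" using J le \<open>a \<le> b\<close> unfolding in_vh_interval_def by auto
    thus False using right by simp
  qed
qed

lemma stretch_char:
  "is_stretch M K vh r a b \<longleftrightarrow> in_vh_interval M K vh r a b
     \<and> (a = 0 \<or> M r (a - 1) \<notin> vh) \<and> (Suc b = K \<or> M r (Suc b) \<notin> vh)"
proof
  assume "is_stretch M K vh r a b"
  thus "in_vh_interval M K vh r a b \<and> (a = 0 \<or> M r (a - 1) \<notin> vh) \<and> (Suc b = K \<or> M r (Suc b) \<notin> vh)"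
    using stretch_boundaries unfolding is_stretch_def by blast
qed (blast intro: boundaries_imp_stretch)

lemma stretch_starts_at: "is_stretch M K vh r a b \<Longrightarrow> starts_at M K vh r a"
  unfolding stretch_char starts_at_def in_vh_interval_def by auto

lemma stretch_ends_at: "is_stretch M K vh r a b \<Longrightarrow> ends_at M K vh r b"
  unfolding stretch_char ends_at_def in_vh_interval_def by auto

text \<open>Two stretches of a row with the same start (or the same end) coincide, since
  the shorter one would have its right (left) boundary inside the longer one.\<close>

lemma stretch_end_unique:
  assumes "is_stretch M K vh r a b1" "is_stretch M K vh r a b2"
  shows "b1 = b2"
proof -
  have False if "is_stretch M K vh r a c" "is_stretch M K vh r a d" "c < d" for c d
    using that unfolding stretch_char in_vh_interval_def by auto
  thus ?thesis using assms by (metis linorder_neqE_nat)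
qed

lemma stretch_start_unique:
  assumes "is_stretch M K vh r a1 b" "is_stretch M K vh r a2 b"
  shows "a1 = a2"
proof -
  have False if "is_stretch M K vh r c b" "is_stretch M K vh r d b" "c < d" for c d
  proof -
    have "c \<le> d - 1 \<and> d - 1 \<le> b" using that unfolding stretch_char in_vh_interval_def by auto
    hence "M r (d - 1) \<in> vh" using that(1) unfolding stretch_char in_vh_interval_def by blast
    thus False using that unfolding stretch_char by auto
  qed
  thus ?thesis using assms by (metis linorder_neqE_nat)
qed

text \<open>Conversely every start column begins a stretch (extend it to the right as far
  as possible) and every end column closes one (extend it to the left).\<close>

lemma starts_at_imp_stretch:
  assumes start: "starts_at M K vh r a"
  obtains b where "is_stretch M K vh r a b"
proof -
  define S where "S = {b. in_vh_interval M K vh r a b}"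
  have "S \<subseteq> {..<K}" unfolding S_def in_vh_interval_def by auto
  hence "finite S" by (rule finite_subset) simp
  moreover have "a \<in> S" using start unfolding S_def starts_at_def in_vh_interval_def
    by (auto simp: le_antisym)
  ultimately obtain b where bS: "b \<in> S" and bmax: "\<And>c. c \<in> S \<Longrightarrow> c \<le> b"
    by (metis Max_in Max_ge empty_iff)
  have I: "in_vh_interval M K vh r a b" using bS by (simp add: S_def)
  have "Suc b = K \<or> M r (Suc b) \<notin> vh"
  proof (rule ccontr)
    assume "\<not> (Suc b = K \<or> M r (Suc b) \<notin> vh)"
    hence "in_vh_interval M K vh r a (Suc b)" using I interval_extend_right by auto
    thus False using bmax[of "Suc b"] by (simp add: S_def)
  qed
  moreover have "a = 0 \<or> M r (a - 1) \<notin> vh" using start by (simp add: starts_at_def)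
  ultimately show thesis using I that boundaries_imp_stretch by blast
qed

lemma ends_at_imp_stretch:
  assumes ending: "ends_at M K vh r b"
  obtains a where "is_stretch M K vh r a b"
proof -
  define S where "S = {a. in_vh_interval M K vh r a b}"
  have "S \<subseteq> {..b}" unfolding S_def in_vh_interval_def by auto
  hence "finite S" by (rule finite_subset) simp
  moreover have "b \<in> S" using ending unfolding S_def ends_at_def in_vh_interval_def
    by (auto simp: le_antisym)
  ultimately obtain a where aS: "a \<in> S" and amin: "\<And>c. c \<in> S \<Longrightarrow> a \<le> c"
    by (metis Min_in Min_le empty_iff)
  have I: "in_vh_interval M K vh r a b" using aS by (simp add: S_def)
  have "a = 0 \<or> M r (a - 1) \<notin> vh"
  proof (rule ccontr)
    assume "\<not> (a = 0 \<or> M r (a - 1) \<notin> vh)"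
    hence "a > 0" and "in_vh_interval M K vh r (a - 1) b"
      using I interval_extend_left by auto
    thus False using amin[of "a - 1"] \<open>a > 0\<close> by (simp add: S_def)
  qed
  moreover have "Suc b = K \<or> M r (Suc b) \<notin> vh" using ending by (simp add: ends_at_def)
  ultimately show thesis using I that boundaries_imp_stretch by blast
qed

lemma num_stretches_starts: "num_stretches M K vh r = card {a. starts_at M K vh r a}"
proof -
  let ?S = "{(a, b). is_stretch M K vh r a b}"
  have inj: "inj_on fst ?S" by (auto simp: inj_on_def dest: stretch_end_unique)
  have "fst ` ?S = {a. starts_at M K vh r a}"
  proof (intro equalityI subsetI)
    fix a assume "a \<in> {a. starts_at M K vh r a}"
    then obtain b where "is_stretch M K vh r a b" using starts_at_imp_stretch by blast
    thus "a \<in> fst ` ?S" by (intro image_eqI[of _ _ "(a, b)"]) auto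
  qed (auto dest: stretch_starts_at)
  then show ?thesis unfolding num_stretches_def using card_image[OF inj] by simp
qed

lemma num_stretches_ends: "num_stretches M K vh r = card {b. ends_at M K vh r b}"
proof -
  let ?S = "{(a, b). is_stretch M K vh r a b}"
  have inj: "inj_on snd ?S" by (auto simp: inj_on_def dest: stretch_start_unique)
  have "snd ` ?S = {b. ends_at M K vh r b}"
  proof (intro equalityI subsetI)
    fix b assume "b \<in> {b. ends_at M K vh r b}"
    then obtain a where "is_stretch M K vh r a b" using ends_at_imp_stretch by blast
    thus "b \<in> snd ` ?S" by (intro image_eqI[of _ _ "(a, b)"]) auto
  qed (auto dest: stretch_ends_at)
  then show ?thesis unfolding num_stretches_def using card_image[OF inj] by simp
qed

lemma num_starting_rows: "num_starting M R K vh k = card {r. r < R \<and> starts_at M K vh r k}"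
proof -
  let ?S = "{(r, a, b). r < R \<and> is_stretch M K vh r a b \<and> a = k}"
  have inj: "inj_on fst ?S" by (auto simp: inj_on_def dest: stretch_end_unique)
  have "fst ` ?S = {r. r < R \<and> starts_at M K vh r k}"
  proof (intro equalityI subsetI)
    fix r assume "r \<in> {r. r < R \<and> starts_at M K vh r k}"
    then obtain b where "r < R" "is_stretch M K vh r k b" using starts_at_imp_stretch by blast
    thus "r \<in> fst ` ?S" by (intro image_eqI[of _ _ "(r, k, b)"]) auto
  qed (auto dest: stretch_starts_at)
  then show ?thesis unfolding num_starting_def using card_image[OF inj] by simp
qed

lemma num_ending_rows: "num_ending M R K vh k = card {r. r < R \<and> ends_at M K vh r k}"
proof -
  let ?S = "{(r, a, b). r < R \<and> is_stretch M K vh r a b \<and> b = k}"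
  have inj: "inj_on fst ?S" by (auto simp: inj_on_def dest: stretch_start_unique)
  have "fst ` ?S = {r. r < R \<and> ends_at M K vh r k}"
  proof (intro equalityI subsetI)
    fix r assume "r \<in> {r. r < R \<and> ends_at M K vh r k}"
    then obtain a where "r < R" "is_stretch M K vh r a k" using ends_at_imp_stretch by blast
    thus "r \<in> fst ` ?S" by (intro image_eqI[of _ _ "(r, a, k)"]) auto
  qed (auto dest: stretch_ends_at)
  then show ?thesis unfolding num_ending_def using card_image[OF inj] by simp
qed

lemma double_count:
  fixes P :: "nat \<Rightarrow> nat \<Rightarrow> bool"
  assumes "\<And>r a. P r a \<Longrightarrow> a < K"
  shows "(\<Sum>r<R. card {a. P r a}) = (\<Sum>k<K. card {r. r < R \<and> P r k})"
proof -
  have row: "card {a. P r a} = (\<Sum>a<K. if P r a then 1 else 0)" for r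
  proof -
    have "{a. P r a} = {a \<in> {..<K}. P r a}" using assms by auto
    thus ?thesis using sum.inter_filter[of "{..<K}" "\<lambda>_. 1::nat" "P r"] by simp
  qed
  have col: "card {r. r < R \<and> P r k} = (\<Sum>r<R. if P r k then 1 else 0)" for k
  proof -
    have "{r. r < R \<and> P r k} = {r \<in> {..<R}. P r k}" by auto
    thus ?thesis using sum.inter_filter[of "{..<R}" "\<lambda>_. 1::nat" "\<lambda>r. P r k"] by simp
  qed
  show ?thesis unfolding row col by (rule sum.swap)
qed

text \<open>The elementary counting estimate behind the bounds: for subsets A, B of a
  finite set U, |A - B| lies between |A| - |B| and |A| - max 0 (|A| + |B| - |U|);
  the latter because |A \<inter> B| \<ge> |A| + |B| - |A \<union> B|.\<close>

lemma card_diff_bounds: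
  assumes "finite U" "A \<subseteq> U" "B \<subseteq> U"
  shows "int (card A) - int (card B) \<le> int (card (A - B))
       \<and> int (card (A - B)) \<le> int (card A) - max 0 (int (card B) + int (card A) - int (card U))"
proof -
  have fin: "finite A" "finite B" using assms finite_subset by auto
  have diff: "card (A - B) = card A - card (A \<inter> B)"
    using fin by (simp add: card_Diff_subset_Int)
  have incl_excl: "card A + card B = card (A \<union> B) + card (A \<inter> B)"
    using fin card_Un_Int by blast
  have "card (A \<inter> B) \<le> card A" "card (A \<inter> B) \<le> card B" "card (A \<union> B) \<le> card U"
    using fin assms by (simp_all add: card_mono)
  thus ?thesis using diff incl_excl by linarith
qed

lemma colcount_inside: "k < K \<Longrightarrow> colcount M R K vh (int k) = int (card {r. r < R \<and> M r k \<in> vh})"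
  unfolding colcount_def by simp

text \<open>Column-wise bounds: the rows where a stretch starts (ends) in column k are
  those meeting vh in column k but not in column k - 1 (k + 1).\<close>

lemma starting_bounds:
  assumes "k < K"
  shows "ls_plus M R K vh k \<le> int (num_starting M R K vh k)
       \<and> int (num_starting M R K vh k) \<le> us_plus M R K vh k"
proof -
  define A where "A = {r. r < R \<and> M r k \<in> vh}"
  define B where "B = (if k = 0 then {} else {r. r < R \<and> M r (k - 1) \<in> vh})"
  have cA: "colcount M R K vh (int k) = int (card A)"
    using assms by (simp add: A_def colcount_inside)
  have cB: "colcount M R K vh (int k - 1) = int (card B)"
    using assms colcount_inside[of "k - 1" K M R vh]
    by (cases "k = 0") (simp_all add: B_def colcount_def of_nat_diff)
  have "{r. r < R \<and> starts_at M K vh r k} = A - B"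
    unfolding A_def B_def starts_at_def using assms by auto
  hence n: "num_starting M R K vh k = card (A - B)" by (simp add: num_starting_rows)
  have "A \<subseteq> {..<R}" "B \<subseteq> {..<R}" unfolding A_def B_def by auto
  from card_diff_bounds[OF finite_lessThan this] show ?thesis
    unfolding n ls_plus_def us_plus_def cA cB by (simp add: add.commute)
qed

lemma ending_bounds:
  assumes "k < K"
  shows "ls_minus M R K vh k \<le> int (num_ending M R K vh k)
       \<and> int (num_ending M R K vh k) \<le> us_minus M R K vh k"
proof -
  define A where "A = {r. r < R \<and> M r k \<in> vh}"
  define B where "B = (if Suc k = K then {} else {r. r < R \<and> M r (Suc k) \<in> vh})"
  have cA: "colcount M R K vh (int k) = int (card A)"
    using assms by (simp add: A_def colcount_inside)
  have cB: "colcount M R K vh (int k + 1) = int (card B)"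
    using assms colcount_inside[of "Suc k" K M R vh]
    by (cases "Suc k = K") (simp_all add: B_def colcount_def add.commute)
  have "{r. r < R \<and> ends_at M K vh r k} = A - B"
    unfolding A_def B_def ends_at_def using assms by auto
  hence n: "num_ending M R K vh k = card (A - B)" by (simp add: num_ending_rows)
  have "A \<subseteq> {..<R}" "B \<subseteq> {..<R}" unfolding A_def B_def by auto
  from card_diff_bounds[OF finite_lessThan this] show ?thesis
    unfolding n ls_minus_def us_minus_def cA cB by (simp add: add.commute)
qed

lemma total_by_starts:
  "(\<Sum>r<R. int (num_stretches M K vh r)) = (\<Sum>k<K. int (num_starting M R K vh k))"
proof -
  have "(\<Sum>r<R. num_stretches M K vh r) = (\<Sum>k<K. num_starting M R K vh k)"
    unfolding num_stretches_starts num_starting_rows by (rule double_count) (simp add: starts_at_def)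
  thus ?thesis by (metis of_nat_sum)
qed

lemma total_by_ends:
  "(\<Sum>r<R. int (num_stretches M K vh r)) = (\<Sum>k<K. int (num_ending M R K vh k))"
proof -
  have "(\<Sum>r<R. num_stretches M K vh r) = (\<Sum>k<K. num_ending M R K vh k)"
    unfolding num_stretches_ends num_ending_rows by (rule double_count) (simp add: ends_at_def)
  thus ?thesis by (metis of_nat_sum)
qed

theorem mainTheorem12:
  fixes M :: "nat \<Rightarrow> nat \<Rightarrow> 'v" and R K :: nat and V vh :: "'v set"
  assumes "finite V"
    and "\<forall>r<R. \<forall>k<K. M r k \<in> V"
    and "vh \<subseteq> V"
  shows "(\<Sum>k<K. ls_plus M R K vh k) \<le> (\<Sum>r<R. int (num_stretches M K vh r))
       \<and> (\<Sum>r<R. int (num_stretches M K vh r)) \<le> (\<Sum>k<K. us_plus M R K vh k)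
       \<and> (\<Sum>k<K. ls_minus M R K vh k) \<le> (\<Sum>r<R. int (num_stretches M K vh r))
       \<and> (\<Sum>r<R. int (num_stretches M K vh r)) \<le> (\<Sum>k<K. us_minus M R K vh k)
       \<and> (\<forall>k<K. ls_plus M R K vh k \<le> int (num_starting M R K vh k)
                \<and> int (num_starting M R K vh k) \<le> us_plus M R K vh k
                \<and> ls_minus M R K vh k \<le> int (num_ending M R K vh k)
                \<and> int (num_ending M R K vh k) \<le> us_minus M R K vh k)"
proof -
  have "(\<Sum>k<K. ls_plus M R K vh k) \<le> (\<Sum>k<K. int (num_starting M R K vh k))"
    by (rule sum_mono) (simp add: starting_bounds)
  moreover have "(\<Sum>k<K. int (num_starting M R K vh k)) \<le> (\<Sum>k<K. us_plus M R K vh k)"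
    by (rule sum_mono) (simp add: starting_bounds)
  moreover have "(\<Sum>k<K. ls_minus M R K vh k) \<le> (\<Sum>k<K. int (num_ending M R K vh k))"
    by (rule sum_mono) (simp add: ending_bounds)
  moreover have "(\<Sum>k<K. int (num_ending M R K vh k)) \<le> (\<Sum>k<K. us_minus M R K vh k)"
    by (rule sum_mono) (simp add: ending_bounds)
  ultimately show ?thesis
    unfolding total_by_starts[symmetric] total_by_ends[symmetric]
    using starting_bounds ending_bounds by blast
qed

end
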